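(* Let $x\in\mathbb{D}$ and $r\in\mathbb{N}$. (i) If $\#\mathbb{A}^+_1(x)\le1$ then $\mathcal{R}_{trim}$ is jointly $J_1$-continuous at $x$; consequently, if $\#\mathbb{A}^+_1(\mathcal{R}^{(j)}_{trim}(x))\le1$ for all $j=0,\dots,r-1$, then $\mathcal{R}^{(r)}_{trim}$ is jointly $J_1$-continuous at $x$. (ii) If $\mathcal{R}_{trim}$ is $J_1$-continuous at $x$ then $\#\mathbb{A}^+_1(x)\le1$. The same statements (i) and (ii) hold with $\mathcal{R}_{trim},\mathcal{R}^{(j)}_{trim}$ replaced by $\widetilde{\mathcal{R}}_{trim},\widetilde{\mathcal{R}}^{(j)}_{trim}$ and $\#\mathbb{A}^+_1(\cdot)$ replaced by $\#\widetilde{\mathbb{A}}_1(\cdot)$.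
   Context: $\mathbb{D}=\mathbb{D}([0,1],\mathbb{R})$ is the space of càdlàg functions on $[0,1]$ with the Skorokhod $J_1$-topology, $\|x\|=\sup_{0\le\tau\le1}|x(\tau)|$. $\Lambda$ is the set of continuous strictly increasing $\lambda:[0,1]\to[0,1]$ with $\lambda(0)=0,\lambda(1)=1$; $I$ the identity. $x_n\to x$ in $J_1$ means there are $\lambda_n\in\Lambda$ with $\|\lambda_n-I\|\vee\|x_n\circ\lambda_n-x\|\to0$. $\Psi:\mathbb{D}\to\mathbb{D}$ is $J_1$-continuous at $x$ if $x_n\to x$ in $J_1$ implies $\Psi(x_n)\to\Psi(x)$ in $J_1$; it is jointly $J_1$-continuous at $x$ if for every $x_n\to x$ in $J_1$ there exist $\lambda_n\in\Lambda$ with simultaneously $\|\lambda_n-I\|\to0$, $\|x_n\circ\lambda_n-x\|\to0$, $\|\Psi(x_n)\circ\lambda_n-\Psi(x)\|\to0$. For $x\in\mathbb{D}$: $\Delta x(\tau)=x(\tau)-x(\tau-)$ ($\tau>0$), $\Delta x(0)=0$; $\mathcal{S}_{+\Delta}(x)(\tau)=\sup_{0\le s\le\tau}\Delta x(s)$, $\widetilde{\mathcal{S}}_\Delta(x)(\tau)=\sup_{0\le s\le\tau}|\Delta x(s)|$. $\mathbb{A}^+_\tau(x)=\{0<s\le\tau:\Delta x(s)=\mathcal{S}_{+\Delta}(x)(\tau)\}$ and $\widetilde{\mathbb{A}}_\tau(x)=\{0<s\le\tau:|\Delta x(s)|=\widetilde{\mathcal{S}}_\Delta(x)(\tau)\}$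 (empty by convention when $x$ is continuous on $[0,\tau]$). First record times: $R_1(x)=\inf\{s\in[0,1]:\Delta x(s)=\mathcal{S}_{+\Delta}(x)(1)\}$, $\widetilde R_1(x)=\inf\{s\in[0,1]:|\Delta x(s)|=\widetilde{\mathcal{S}}_\Delta(x)(1)\}$. Record time trimmers: $\mathcal{R}_{trim}(x)=x-\Delta x(R_1(x))\mathbf{1}_{[R_1(x),1]}$, $\widetilde{\mathcal{R}}_{trim}(x)=x-\Delta x(\widetilde R_1(x))\mathbf{1}_{[\widetilde R_1(x),1]}$; $\mathcal{R}^{(0)}_{trim}(x)=x$, $\mathcal{R}^{(r)}_{trim}(x)=\mathcal{R}_{trim}(\mathcal{R}^{(r-1)}_{trim}(x))$, and likewise $\widetilde{\mathcal{R}}^{(0)}_{trim}(x)=x$, $\widetilde{\mathcal{R}}^{(r)}_{trim}(x)=\widetilde{\mathcal{R}}_{trim}(\widetilde{\mathcal{R}}^{(r-1)}_{trim}(x))$. *)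

theory Defs
  imports "HOL-Analysis.Analysis"
begin

text \<open>Elements of D([0,1],R) are represented as functions real => real; only the
values on [0,1] are relevant.\<close>

definition cadlag :: "(real \<Rightarrow> real) \<Rightarrow> bool" where
  "cadlag x \<longleftrightarrow>
     (\<forall>t\<in>{0..<1}. (x \<longlongrightarrow> x t) (at_right t)) \<and>
     (\<forall>t\<in>{0<..1}. \<exists>l. (x \<longlongrightarrow> l) (at_left t))"

definition Lambda :: "(real \<Rightarrow> real) set" where
  "Lambda = {lam. continuous_on {0..1} lam \<and> strict_mono_on {0..1} lam
                  \<and> lam 0 = 0 \<and> lam 1 = 1}"

definition unif_to_zero :: "(nat \<Rightarrow> real \<Rightarrow> real) \<Rightarrow> bool" where
  "unif_to_zero f \<longleftrightarrow>
     (\<forall>e>0. eventually (\<lambda>n. \<forall>\<tau>\<in>{0..1}. \<bar>f n \<tau>\<bar> < e) sequentially)"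

definition J1_conv :: "(nat \<Rightarrow> real \<Rightarrow> real) \<Rightarrow> (real \<Rightarrow> real) \<Rightarrow> bool" where
  "J1_conv xs x \<longleftrightarrow>
     (\<exists>lam. (\<forall>n. lam n \<in> Lambda) \<and> unif_to_zero (\<lambda>n \<tau>. lam n \<tau> - \<tau>)
           \<and> unif_to_zero (\<lambda>n \<tau>. xs n (lam n \<tau>) - x \<tau>))"

definition J1_continuous_at ::
    "((real \<Rightarrow> real) \<Rightarrow> (real \<Rightarrow> real)) \<Rightarrow> (real \<Rightarrow> real) \<Rightarrow> bool" where
  "J1_continuous_at Psi x \<longleftrightarrow>
     (\<forall>xs. (\<forall>n. cadlag (xs n)) \<longrightarrow> J1_conv xs x \<longrightarrow>
        J1_conv (\<lambda>n. Psi (xs n)) (Psi x))"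

definition J1_jointly_continuous_at ::
    "((real \<Rightarrow> real) \<Rightarrow> (real \<Rightarrow> real)) \<Rightarrow> (real \<Rightarrow> real) \<Rightarrow> bool" where
  "J1_jointly_continuous_at Psi x \<longleftrightarrow>
     (\<forall>xs. (\<forall>n. cadlag (xs n)) \<longrightarrow> J1_conv xs x \<longrightarrow>
        (\<exists>lam. (\<forall>n. lam n \<in> Lambda) \<and> unif_to_zero (\<lambda>n \<tau>. lam n \<tau> - \<tau>)
           \<and> unif_to_zero (\<lambda>n \<tau>. xs n (lam n \<tau>) - x \<tau>)
           \<and> unif_to_zero (\<lambda>n \<tau>. Psi (xs n) (lam n \<tau>) - Psi x \<tau>)))"

definition jump :: "(real \<Rightarrow> real) \<Rightarrow> real \<Rightarrow> real" where
  "jump x \<tau> = (if \<tau> \<le> 0 then 0 else x \<tau> - Lim (at_left \<tau>) x)"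

definition S_plus :: "(real \<Rightarrow> real) \<Rightarrow> real \<Rightarrow> real" where
  "S_plus x \<tau> = (SUP s\<in>{0..\<tau>}. jump x s)"

definition S_abs :: "(real \<Rightarrow> real) \<Rightarrow> real \<Rightarrow> real" where
  "S_abs x \<tau> = (SUP s\<in>{0..\<tau>}. \<bar>jump x s\<bar>)"

definition A_plus :: "real \<Rightarrow> (real \<Rightarrow> real) \<Rightarrow> real set" where
  "A_plus \<tau> x = {s. 0 < s \<and> s \<le> \<tau> \<and> S_plus x \<tau> > 0 \<and> jump x s = S_plus x \<tau>}"

definition A_abs :: "real \<Rightarrow> (real \<Rightarrow> real) \<Rightarrow> real set" where
  "A_abs \<tau> x = {s. 0 < s \<and> s \<le> \<tau> \<and> S_abs x \<tau> > 0 \<and> \<bar>jump x s\<bar> = S_abs x \<tau>}"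

definition R1 :: "(real \<Rightarrow> real) \<Rightarrow> real" where
  "R1 x = Inf {s\<in>{0..1}. jump x s = S_plus x 1}"

definition R1_abs :: "(real \<Rightarrow> real) \<Rightarrow> real" where
  "R1_abs x = Inf {s\<in>{0..1}. \<bar>jump x s\<bar> = S_abs x 1}"

definition R_trim :: "(real \<Rightarrow> real) \<Rightarrow> (real \<Rightarrow> real)" where
  "R_trim x = (\<lambda>t. x t - jump x (R1 x) * indicator {R1 x..1} t)"

definition R_trim_abs :: "(real \<Rightarrow> real) \<Rightarrow> (real \<Rightarrow> real)" where
  "R_trim_abs x = (\<lambda>t. x t - jump x (R1_abs x) * indicator {R1_abs x..1} t)"

definition at_most_one :: "'a set \<Rightarrow> bool" where
  "at_most_one A \<longleftrightarrow> finite A \<and> card A \<le> 1"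

end

theory Submission
  imports Defs
begin

text \<open>
  Both trimmers are instances of one construction: for a gauge \<open>g\<close> (the identity or the
  absolute value), \<open>trim g\<close> removes the first jump of maximal \<open>g\<close>-size \<open>S\<close>. A cadlag
  path has only finitely many jumps above any positive level, so if \<open>S\<close> is attained at a
  single time \<open>t\<close>, all other jumps are at least some \<open>\<eta> > 0\<close> below \<open>S\<close>. Read through a
  time change \<open>\<lambda>\<close> that makes it \<open>\<delta>\<close>-close to \<open>x\<close>, a path \<open>z\<close> has its jumps within
  \<open>2\<delta>\<close> of those of \<open>x\<close>; for small \<open>\<delta>\<close> its unique record is then at \<open>\<lambda> t\<close>, so both trims
  remove matching jumps and stay \<open>3\<delta>\<close>-close under the same \<open>\<lambda>\<close>. Iterating gives the
  statement for \<open>trim g ^^ r\<close>.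

  Conversely, if \<open>S\<close> is attained at the first two record times \<open>t\<^sub>1 < t\<^sub>2\<close>, shrink the
  jump at \<open>t\<^sub>1\<close> by a vanishing fraction. The perturbed paths converge to \<open>x\<close>, but their
  first record is \<open>t\<^sub>2\<close>, so their trims lose the jump at \<open>t\<^sub>2\<close> that \<open>trim g x\<close> keeps, and
  no other jump of size close to \<open>S\<close> lies near \<open>t\<^sub>2\<close>: the trims cannot converge.
\<close>

lemma cadlag_tendsto_left_Lim:
  assumes "cadlag x" "0 < t" "t \<le> 1"
  shows "(x \<longlongrightarrow> Lim (at_left t) x) (at_left t)"
proof -
  have "\<exists>l. (x \<longlongrightarrow> l) (at_left t)"
    using assms by (simp add: cadlag_def)
  then show ?thesis by (metis tendsto_Lim trivial_limit_at_left_real)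
qed

lemma jump_eq_of_tendsto_left:
  assumes "0 < t" "(x \<longlongrightarrow> L) (at_left t)"
  shows "jump x t = x t - L"
  using assms by (simp add: jump_def tendsto_Lim)

lemma jump_0 [simp]: "jump x 0 = 0"
  by (simp add: jump_def)

lemma jump_le_of_oscillation:
  assumes "cadlag x" "0 < s" "s \<le> 1" "a < s"
    and osc: "\<And>y. a < y \<Longrightarrow> y \<le> s \<Longrightarrow> \<bar>x y - c\<bar> \<le> e"
  shows "\<bar>jump x s\<bar> \<le> 2 * e"
proof -
  have L: "(x \<longlongrightarrow> Lim (at_left s) x) (at_left s)"
    using cadlag_tendsto_left_Lim assms by blast
  have "eventually (\<lambda>y. y \<in> {a<..<s}) (at_left s)"
    using \<open>a < s\<close> by (rule eventually_at_left_real)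
  then have "eventually (\<lambda>y. \<bar>x y - c\<bar> \<le> e) (at_left s)"
    by eventually_elim (simp add: osc)
  then have "\<bar>Lim (at_left s) x - c\<bar> \<le> e"
    by (intro tendsto_upperbound[OF tendsto_rabs[OF tendsto_diff[OF L tendsto_const]]]) auto
  moreover have "\<bar>x s - c\<bar> \<le> e"
    using \<open>a < s\<close> osc by simp
  ultimately show ?thesis
    using jump_eq_of_tendsto_left[OF \<open>0 < s\<close> L] by linarith
qed

lemma cadlag_jump_small_right:
  assumes "cadlag x" "0 \<le> t" "t < 1" "e > 0"
  obtains d where "d > 0" "\<And>s. t < s \<Longrightarrow> s < t + d \<Longrightarrow> s \<le> 1 \<Longrightarrow> \<bar>jump x s\<bar> < e"
proof -
  have "(x \<longlongrightarrow> x t) (at_right t)"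
    using assms by (simp add: cadlag_def)
  then have "eventually (\<lambda>y. dist (x y) (x t) < e/4) (at_right t)"
    by (rule tendstoD) (use \<open>e > 0\<close> in simp)
  then obtain b where "b > t" and b: "\<And>y. t < y \<Longrightarrow> y < b \<Longrightarrow> \<bar>x y - x t\<bar> < e/4"
    by (auto simp: eventually_at_right_field dist_real_def)
  show ?thesis
  proof (rule that[of "b - t"])
    fix s assume s: "t < s" "s < t + (b - t)" "s \<le> 1"
    have "\<bar>jump x s\<bar> \<le> 2 * (e/4)"
      using s assms(2) b
      by (intro jump_le_of_oscillation[OF assms(1), where a = t and c = "x t"])
        (auto intro: less_imp_le)
    then show "\<bar>jump x s\<bar> < e"
      using \<open>e > 0\<close> by linarith
  qed (use \<open>b > t\<close> in simp)
qed

lemma cadlag_jump_small_left: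
  assumes "cadlag x" "0 < t" "t \<le> 1" "e > 0"
  obtains d where "d > 0" "\<And>s. t - d < s \<Longrightarrow> s < t \<Longrightarrow> \<bar>jump x s\<bar> < e"
proof -
  define L where "L = Lim (at_left t) x"
  have "(x \<longlongrightarrow> L) (at_left t)"
    unfolding L_def using cadlag_tendsto_left_Lim assms by auto
  then have "eventually (\<lambda>y. dist (x y) L < e/4) (at_left t)"
    by (rule tendstoD) (use \<open>e > 0\<close> in simp)
  then obtain b where "b < t" and b: "\<And>y. b < y \<Longrightarrow> y < t \<Longrightarrow> \<bar>x y - L\<bar> < e/4"
    by (auto simp: eventually_at_left_field dist_real_def)
  show ?thesis
  proof (rule that[of "t - b"])
    fix s assume s: "t - (t - b) < s" "s < t"
    show "\<bar>jump x s\<bar> < e"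
    proof (cases "0 < s")
      case True
      have "\<bar>jump x s\<bar> \<le> 2 * (e/4)"
        using s assms(3) b True
        by (intro jump_le_of_oscillation[OF assms(1), where a = b and c = L])
          (auto intro: less_imp_le)
      then show ?thesis
        using \<open>e > 0\<close> by linarith
    qed (use \<open>e > 0\<close> in \<open>simp add: jump_def\<close>)
  qed (use \<open>b < t\<close> in simp)
qed

lemma cadlag_jump_small_near:
  assumes "cadlag x" "t \<in> {0..1}" "e > 0"
  shows "\<exists>d>0. \<forall>s\<in>{0..1}. s \<noteq> t \<and> \<bar>s - t\<bar> < d \<longrightarrow> \<bar>jump x s\<bar> < e"
proof -
  obtain d1 where "d1 > 0" and d1: "\<And>s. t < s \<Longrightarrow> s < t + d1 \<Longrightarrow> s \<le> 1 \<Longrightarrow> \<bar>jump x s\<bar> < e"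
  proof (cases "t < 1")
    case True
    then show ?thesis
      using cadlag_jump_small_right[OF assms(1) _ True assms(3)] assms(2) that by auto
  qed (rule that[of 1], auto)
  obtain d2 where "d2 > 0" and d2: "\<And>s. t - d2 < s \<Longrightarrow> s < t \<Longrightarrow> \<bar>jump x s\<bar> < e"
  proof (cases "0 < t")
    case True
    then show ?thesis
      using cadlag_jump_small_left[OF assms(1) True _ assms(3)] assms(2) that by auto
  qed (rule that[of 1], use \<open>e > 0\<close> in \<open>auto simp: jump_def\<close>)
  show ?thesis
  proof (intro exI[of _ "min d1 d2"] conjI ballI impI)
    fix s assume "s \<in> {0..1}" "s \<noteq> t \<and> \<bar>s - t\<bar> < min d1 d2"
    then show "\<bar>jump x s\<bar> < e"
      using d1 d2 by (cases "s < t") auto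
  qed (use \<open>d1 > 0\<close> \<open>d2 > 0\<close> in simp)
qed

lemma cadlag_finite_large_jumps:
  assumes "cadlag x" "e > 0"
  shows "finite {t\<in>{0..1}. \<bar>jump x t\<bar> \<ge> e}"
proof -
  obtain d where d: "\<And>t. t \<in> {0..1} \<Longrightarrow> d t > 0"
    "\<And>t s. t \<in> {0..1} \<Longrightarrow> s \<in> {0..1} \<Longrightarrow> s \<noteq> t \<Longrightarrow> \<bar>s - t\<bar> < d t \<Longrightarrow> \<bar>jump x s\<bar> < e"
    using cadlag_jump_small_near[OF assms(1) _ assms(2)] by metis
  have cover: "{0..1::real} \<subseteq> (\<Union>c\<in>{0..1}. ball c (d c))"
    using d(1) by force
  obtain C where C: "C \<subseteq> {0..1}" "finite C" "{0..1::real} \<subseteq> (\<Union>c\<in>C. ball c (d c))"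
    by (rule compactE_image[OF compact_Icc _ cover]) auto
  have "{t\<in>{0..1}. \<bar>jump x t\<bar> \<ge> e} \<subseteq> C"
  proof
    fix s assume s: "s \<in> {t\<in>{0..1}. \<bar>jump x t\<bar> \<ge> e}"
    then obtain c where "c \<in> C" "\<bar>s - c\<bar> < d c"
      using C(3) by (force simp: dist_real_def abs_minus_commute)
    with s C(1) d(2)[of c s] show "s \<in> C" by force
  qed
  then show ?thesis using C(2) finite_subset by blast
qed

lemma cadlag_jumps_bounded:
  assumes "cadlag x"
  obtains M where "\<And>s. s \<in> {0..1} \<Longrightarrow> \<bar>jump x s\<bar> \<le> M"
proof
  define F where "F = {t\<in>{0..1}. \<bar>jump x t\<bar> \<ge> 1}"
  have "finite F"
    unfolding F_def using cadlag_finite_large_jumps[OF assms] by simp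
  fix s :: real assume "s \<in> {0..1}"
  show "\<bar>jump x s\<bar> \<le> 1 + (\<Sum>t\<in>F. \<bar>jump x t\<bar>)"
  proof (cases "s \<in> F")
    case True
    then have "\<bar>jump x s\<bar> \<le> (\<Sum>t\<in>F. \<bar>jump x t\<bar>)"
      using \<open>finite F\<close> by (intro member_le_sum) auto
    then show ?thesis by simp
  next
    case False
    then have "\<bar>jump x s\<bar> < 1"
      using \<open>s \<in> {0..1}\<close> unfolding F_def by auto
    moreover have "0 \<le> (\<Sum>t\<in>F. \<bar>jump x t\<bar>)"
      by (simp add: sum_nonneg)
    ultimately show ?thesis by linarith
  qed
qed

lemma Lambda_id: "(\<lambda>t. t) \<in> Lambda"
  by (auto simp: Lambda_def strict_mono_on_def)

lemma Lambda_le_iff: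
  assumes "lam \<in> Lambda" "a \<in> {0..1}" "b \<in> {0..1}"
  shows "lam a \<le> lam b \<longleftrightarrow> a \<le> b"
  using strict_mono_on_less_eq[of "{0..1}" lam a b] assms by (simp add: Lambda_def)

lemma Lambda_maps_unit:
  assumes "lam \<in> Lambda" "t \<in> {0..1}"
  shows "lam t \<in> {0..1}"
proof -
  have "lam 0 \<le> lam t" "lam t \<le> lam 1"
    using Lambda_le_iff[OF assms(1)] assms(2) by auto
  then show ?thesis
    using assms(1) by (simp add: Lambda_def)
qed

lemma Lambda_pos:
  assumes "lam \<in> Lambda" "0 < t" "t \<le> 1"
  shows "0 < lam t"
proof -
  have "lam 0 < lam t"
    using assms by (intro strict_mono_onD[of "{0..1}" lam]) (auto simp: Lambda_def)
  then show ?thesis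
    using assms(1) by (simp add: Lambda_def)
qed

lemma Lambda_surj:
  assumes "lam \<in> Lambda" "s \<in> {0..1}"
  obtains t where "t \<in> {0..1}" "lam t = s"
  using IVT'[of lam 0 s 1] assms by (auto simp: Lambda_def)

lemma Lambda_filterlim_at_left:
  assumes "lam \<in> Lambda" "0 < t" "t \<le> 1"
  shows "filterlim lam (at_left (lam t)) (at_left t)"
proof -
  have "continuous_on {0..t} lam"
    using assms by (auto simp: Lambda_def elim: continuous_on_subset)
  then have "(lam \<longlongrightarrow> lam t) (at t within {0..t})"
    using assms by (simp add: continuous_on_def)
  then have "(lam \<longlongrightarrow> lam t) (at_left t)"
    using assms by (simp add: at_within_Icc_at_left)
  moreover have "eventually (\<lambda>s. s \<in> {0<..<t}) (at_left t)"
    using assms by (intro eventually_at_left_real) auto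
  then have "eventually (\<lambda>s. lam s \<in> {..<lam t} \<and> lam s \<noteq> lam t) (at_left t)"
  proof eventually_elim
    case (elim s)
    then have "lam s < lam t"
      using assms by (intro strict_mono_onD[of "{0..1}" lam]) (auto simp: Lambda_def)
    then show ?case by simp
  qed
  ultimately show ?thesis by (simp add: filterlim_at)
qed

lemma jump_time_change_close:
  assumes "lam \<in> Lambda" "cadlag z" "cadlag x"
    and close: "\<forall>\<tau>\<in>{0..1}. \<bar>z (lam \<tau>) - x \<tau>\<bar> \<le> \<delta>" and "t \<in> {0..1}"
  shows "\<bar>jump z (lam t) - jump x t\<bar> \<le> 2 * \<delta>"
proof (cases "t = 0")
  case True
  then show ?thesis using close assms(1) by (force simp: Lambda_def)
next
  case False
  then have t: "0 < t" "t \<le> 1" using assms(5) by auto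
  have lt: "0 < lam t" "lam t \<le> 1"
    using Lambda_pos[OF assms(1) t] Lambda_maps_unit[OF assms(1,5)] by auto
  define Lz where "Lz = Lim (at_left (lam t)) z"
  define Lx where "Lx = Lim (at_left t) x"
  have Z: "(z \<longlongrightarrow> Lz) (at_left (lam t))"
    unfolding Lz_def using cadlag_tendsto_left_Lim[OF assms(2) lt] .
  have X: "(x \<longlongrightarrow> Lx) (at_left t)"
    unfolding Lx_def using cadlag_tendsto_left_Lim[OF assms(3) t] .
  have "eventually (\<lambda>s. s \<in> {0<..<t}) (at_left t)"
    using t by (intro eventually_at_left_real) auto
  then have "eventually (\<lambda>s. \<bar>z (lam s) - x s\<bar> \<le> \<delta>) (at_left t)"
    by eventually_elim (use close t in auto)
  then have "\<bar>Lz - Lx\<bar> \<le> \<delta>"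
    using filterlim_compose[OF Z Lambda_filterlim_at_left[OF assms(1) t]] X
    by (intro tendsto_upperbound[OF tendsto_rabs[OF tendsto_diff]]) auto
  moreover have "\<bar>z (lam t) - x t\<bar> \<le> \<delta>"
    using close assms(5) by auto
  ultimately show ?thesis
    using jump_eq_of_tendsto_left[OF lt(1) Z] jump_eq_of_tendsto_left[OF t(1) X] by linarith
qed

lemma eventually_indicator_at_left:
  fixes s t :: real
  assumes "s \<le> 1"
  shows "eventually (\<lambda>u. indicator {t..1} u = (if t < s then 1 else (0::real))) (at_left s)"
proof (cases "t < s")
  case True
  have "eventually (\<lambda>u. u \<in> {t<..<s}) (at_left s)"
    using True by (rule eventually_at_left_real)
  then show ?thesis by eventually_elim (use True assms in auto)
next
  case False
  have "eventually (\<lambda>u. u \<in> {s-1<..<s}) (at_left s)"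
    by (rule eventually_at_left_real) auto
  then show ?thesis by eventually_elim (use False in auto)
qed

lemma eventually_indicator_at_right:
  fixes s t :: real
  assumes "s < 1"
  shows "eventually (\<lambda>u. indicator {t..1} u = (indicator {t..1} s :: real)) (at_right s)"
proof (cases "t \<le> s")
  case True
  have "eventually (\<lambda>u. u \<in> {s<..<1}) (at_right s)"
    using assms by (rule eventually_at_right_real)
  then show ?thesis by eventually_elim (use True assms in auto)
next
  case False
  have "eventually (\<lambda>u. u \<in> {s<..<t}) (at_right s)"
    using False by (intro eventually_at_right_real) auto
  then show ?thesis by eventually_elim (use False in auto)
qed

lemma tendsto_left_minus_step:
  fixes y :: "real \<Rightarrow> real"
  assumes "(y \<longlongrightarrow> L) (at_left s)" "s \<le> 1"
  shows "((\<lambda>u. y u - c * indicator {t..1} u) \<longlongrightarrow> L - c * (if t < s then 1 else 0)) (at_left s)"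
proof -
  have "((\<lambda>u. y u - c * (if t < s then 1 else 0)) \<longlongrightarrow> L - c * (if t < s then 1 else 0)) (at_left s)"
    by (intro tendsto_diff tendsto_const assms(1))
  then show ?thesis
    by (rule Lim_transform_eventually)
      (use eventually_indicator_at_left[OF assms(2), of t] in \<open>eventually_elim, simp\<close>)
qed

lemma cadlag_minus_step:
  fixes y :: "real \<Rightarrow> real"
  assumes "cadlag y"
  shows "cadlag (\<lambda>u. y u - c * indicator {t..1} u)"
  unfolding cadlag_def
proof (intro conjI ballI)
  fix s :: real assume s: "s \<in> {0..<1}"
  have "((\<lambda>u. y u - c * indicator {t..1} s) \<longlongrightarrow> y s - c * indicator {t..1} s) (at_right s)"
    using assms s unfolding cadlag_def by (intro tendsto_intros) auto
  moreover have
    "eventually (\<lambda>u. y u - c * indicator {t..1} s = y u - c * indicator {t..1} u) (at_right s)"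
    by (rule eventually_mono[OF eventually_indicator_at_right[of s t]]) (use s in auto)
  ultimately show "((\<lambda>u. y u - c * indicator {t..1} u) \<longlongrightarrow> y s - c * indicator {t..1} s) (at_right s)"
    by (rule Lim_transform_eventually)
next
  fix s :: real assume "s \<in> {0<..1}"
  then have "(y \<longlongrightarrow> Lim (at_left s) y) (at_left s)"
    using cadlag_tendsto_left_Lim[OF assms] by simp
  then show "\<exists>l. ((\<lambda>u. y u - c * indicator {t..1} u) \<longlongrightarrow> l) (at_left s)"
    using tendsto_left_minus_step \<open>s \<in> {0<..1}\<close> by fastforce
qed

lemma jump_minus_step:
  assumes "cadlag y" "0 < s" "s \<le> 1"
  shows "jump (\<lambda>u. y u - c * indicator {t..1} u) s = jump y s - (if s = t then c else 0)"
proof -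
  define L where "L = Lim (at_left s) y"
  have Y: "(y \<longlongrightarrow> L) (at_left s)"
    unfolding L_def using cadlag_tendsto_left_Lim[OF assms] .
  show ?thesis
    using jump_eq_of_tendsto_left[OF assms(2) tendsto_left_minus_step[OF Y assms(3), of c t]]
      jump_eq_of_tendsto_left[OF assms(2) Y] assms
    by (auto simp: indicator_def)
qed

definition jump_gauge :: "(real \<Rightarrow> real) \<Rightarrow> bool" where
  "jump_gauge g \<longleftrightarrow>
     (\<forall>u v. \<bar>g u - g v\<bar> \<le> \<bar>u - v\<bar>) \<and> (\<forall>u. 0 \<le> g u \<longrightarrow> g u = \<bar>u\<bar>)
     \<and> (\<forall>c u. 0 \<le> c \<longrightarrow> g (c * u) = c * g u)"

definition sup_jump :: "(real \<Rightarrow> real) \<Rightarrow> (real \<Rightarrow> real) \<Rightarrow> real" where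
  "sup_jump g z = (SUP s\<in>{0..1}. g (jump z s))"

definition record_times :: "(real \<Rightarrow> real) \<Rightarrow> (real \<Rightarrow> real) \<Rightarrow> real set" where
  "record_times g z = {s. 0 < s \<and> s \<le> 1 \<and> sup_jump g z > 0 \<and> g (jump z s) = sup_jump g z}"

definition first_record :: "(real \<Rightarrow> real) \<Rightarrow> (real \<Rightarrow> real) \<Rightarrow> real" where
  "first_record g z = Inf {s\<in>{0..1}. g (jump z s) = sup_jump g z}"

definition trim :: "(real \<Rightarrow> real) \<Rightarrow> (real \<Rightarrow> real) \<Rightarrow> (real \<Rightarrow> real)" where
  "trim g z = (\<lambda>t. z t - jump z (first_record g z) * indicator {first_record g z..1} t)"

lemma jump_gauge_id: "jump_gauge (\<lambda>u. u)"
  by (simp add: jump_gauge_def)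

lemma jump_gauge_abs: "jump_gauge abs"
  by (auto simp: jump_gauge_def abs_mult)

lemma R_trim_eq_trim: "R_trim = trim (\<lambda>u. u)"
  by (simp add: fun_eq_iff R_trim_def trim_def R1_def first_record_def S_plus_def sup_jump_def)

lemma R_trim_abs_eq_trim: "R_trim_abs = trim abs"
  by (simp add: fun_eq_iff R_trim_abs_def trim_def R1_abs_def first_record_def S_abs_def
      sup_jump_def)

lemma A_plus_eq_record_times: "A_plus 1 = record_times (\<lambda>u. u)"
  by (simp add: fun_eq_iff A_plus_def record_times_def S_plus_def sup_jump_def)

lemma A_abs_eq_record_times: "A_abs 1 = record_times abs"
  by (simp add: fun_eq_iff A_abs_def record_times_def S_abs_def sup_jump_def)

lemma cadlag_trim: "cadlag z \<Longrightarrow> cadlag (trim g z)"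
  unfolding trim_def by (rule cadlag_minus_step)

lemma cadlag_funpow_trim: "cadlag z \<Longrightarrow> cadlag ((trim g ^^ n) z)"
  by (induction n) (auto intro: cadlag_trim)

lemma jump_trim:
  assumes "cadlag z" "0 < s" "s \<le> 1"
  shows "jump (trim g z) s = (if s = first_record g z then 0 else jump z s)"
  unfolding trim_def using jump_minus_step[OF assms] by simp

definition shrink_jump :: "real \<Rightarrow> real \<Rightarrow> (real \<Rightarrow> real) \<Rightarrow> (real \<Rightarrow> real)" where
  "shrink_jump w t x = (\<lambda>u. x u - w * jump x t * indicator {t..1} u)"

lemma cadlag_shrink_jump: "cadlag x \<Longrightarrow> cadlag (shrink_jump w t x)"
  unfolding shrink_jump_def by (rule cadlag_minus_step)

lemma jump_shrink_jump:
  assumes "cadlag x" "0 < s" "s \<le> 1"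
  shows "jump (shrink_jump w t x) s = (if s = t then (1 - w) * jump x t else jump x s)"
proof -
  have "jump (shrink_jump w t x) s = jump x s - (if s = t then w * jump x t else 0)"
    unfolding shrink_jump_def by (rule jump_minus_step[OF assms])
  then show ?thesis
    by (simp add: left_diff_distrib)
qed

lemma J1_conv_shrink_jump_vanishing:
  assumes "w \<longlonglongrightarrow> 0"
  shows "J1_conv (\<lambda>n. shrink_jump (w n) t x) x"
  unfolding J1_conv_def
proof (intro exI[of _ "\<lambda>n \<tau>. \<tau>"] conjI allI Lambda_id)
  show "unif_to_zero (\<lambda>n \<tau>. \<tau> - \<tau>)"
    by (simp add: unif_to_zero_def)
  show "unif_to_zero (\<lambda>n \<tau>. shrink_jump (w n) t x \<tau> - x \<tau>)"
    unfolding unif_to_zero_def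
  proof (intro allI impI)
    fix e :: real assume "e > 0"
    have "(\<lambda>n. w n * jump x t) \<longlonglongrightarrow> 0"
      using tendsto_mult_left_zero[OF assms] .
    then have "eventually (\<lambda>n. \<bar>w n * jump x t\<bar> < e) sequentially"
      using \<open>e > 0\<close> by (auto dest: tendstoD)
    then show "eventually (\<lambda>n. \<forall>\<tau>\<in>{0..1}. \<bar>shrink_jump (w n) t x \<tau> - x \<tau>\<bar> < e) sequentially"
      by eventually_elim (use \<open>e > 0\<close> in \<open>auto simp: shrink_jump_def indicator_def\<close>)
  qed
qed

context
  fixes g :: "real \<Rightarrow> real"
  assumes g: "jump_gauge g"
begin

lemma jump_gauge_lipschitz: "\<bar>g u - g v\<bar> \<le> \<bar>u - v\<bar>"
  using g by (simp add: jump_gauge_def)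

lemma jump_gauge_nonneg_eq_abs: "0 \<le> g u \<Longrightarrow> g u = \<bar>u\<bar>"
  using g by (simp add: jump_gauge_def)

lemma jump_gauge_pos_homogeneous: "0 \<le> c \<Longrightarrow> g (c * u) = c * g u"
  using g by (simp add: jump_gauge_def)

lemma jump_gauge_0 [simp]: "g 0 = 0"
  using jump_gauge_pos_homogeneous[of 0 0] by simp

lemma jump_gauge_le_abs: "g u \<le> \<bar>u\<bar>"
  using jump_gauge_lipschitz[of u 0] by simp

lemma sup_jump_upper:
  assumes "cadlag z" "s \<in> {0..1}"
  shows "g (jump z s) \<le> sup_jump g z"
proof -
  obtain M where "\<And>s. s \<in> {0..1} \<Longrightarrow> \<bar>jump z s\<bar> \<le> M"
    using cadlag_jumps_bounded[OF assms(1)] by blast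
  then have "bdd_above ((\<lambda>s. g (jump z s)) ` {0..1})"
    using jump_gauge_le_abs by (intro bdd_aboveI2[of _ _ M]) (meson order_trans)
  then show ?thesis
    unfolding sup_jump_def by (rule cSUP_upper[OF assms(2)])
qed

lemma sup_jump_nonneg: "cadlag z \<Longrightarrow> 0 \<le> sup_jump g z"
  using sup_jump_upper[of z 0] by simp

lemma sup_jump_least: "(\<And>s. s \<in> {0..1} \<Longrightarrow> g (jump z s) \<le> M) \<Longrightarrow> sup_jump g z \<le> M"
  unfolding sup_jump_def by (rule cSUP_least) auto

lemma record_times_subset_large_jumps:
  "record_times g z \<subseteq> {t\<in>{0..1}. \<bar>jump z t\<bar> \<ge> sup_jump g z}"
  by (auto simp: record_times_def jump_gauge_nonneg_eq_abs[symmetric])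

lemma record_times_finite:
  assumes "cadlag z"
  shows "finite (record_times g z)"
proof (cases "sup_jump g z > 0")
  case True
  then show ?thesis
    using cadlag_finite_large_jumps[OF assms True] record_times_subset_large_jumps finite_subset
    by blast
qed (simp add: record_times_def)

lemma record_times_gap:
  assumes "cadlag z" "sup_jump g z > 0"
  obtains \<eta> where "\<eta> > 0" "\<And>t. t \<in> {0..1} \<Longrightarrow> t \<notin> record_times g z \<Longrightarrow> g (jump z t) \<le> sup_jump g z - \<eta>"
proof -
  define S where "S = sup_jump g z"
  define F where "F = {t\<in>{0..1}. \<bar>jump z t\<bar> \<ge> S/2}"
  define V where "V = (\<lambda>t. g (jump z t)) ` (F - record_times g z)"
  have "finite F"
    unfolding F_def using cadlag_finite_large_jumps[OF assms(1), of "S/2"] assms(2) S_def by simp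
  then have "finite V"
    unfolding V_def by simp
  have V_less: "v < S" if "v \<in> V" for v
  proof -
    obtain t where t: "t \<in> {0..1}" "t \<notin> record_times g z" "v = g (jump z t)"
      using \<open>v \<in> V\<close> unfolding V_def F_def by auto
    then have "v \<le> S" "t = 0 \<or> v \<noteq> S"
      using sup_jump_upper[OF assms(1)] assms(2) unfolding S_def record_times_def by auto
    then show "v < S" using t assms(2) S_def by fastforce
  qed
  define m where "m = Max (insert 0 V)"
  have "m < S"
    unfolding m_def using \<open>finite V\<close> V_less assms(2) S_def by simp
  show ?thesis
  proof (rule that[of "min (S/2) (S - m)"])
    show "min (S/2) (S - m) > 0"
      using \<open>m < S\<close> assms(2) S_def by simp
    fix t assume t: "t \<in> {0..1}" "t \<notin> record_times g z"
    show "g (jump z t) \<le> sup_jump g z - min (S/2) (S - m)"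
    proof (cases "t \<in> F")
      case True
      then have "g (jump z t) \<le> m"
        unfolding m_def V_def using \<open>finite V\<close> t V_def by (intro Max_ge) auto
      then show ?thesis unfolding S_def by linarith
    next
      case False
      then have "g (jump z t) < S/2"
        using t jump_gauge_le_abs[of "jump z t"] unfolding F_def by simp
      then show ?thesis unfolding S_def by linarith
    qed
  qed
qed

lemma record_times_nonempty:
  assumes "cadlag z" "sup_jump g z > 0"
  shows "record_times g z \<noteq> {}"
proof
  assume "record_times g z = {}"
  obtain \<eta> where "\<eta> > 0" "\<And>t. t \<in> {0..1} \<Longrightarrow> t \<notin> record_times g z \<Longrightarrow> g (jump z t) \<le> sup_jump g z - \<eta>"
    using record_times_gap[OF assms] by blast
  with \<open>record_times g z = {}\<close> have "sup_jump g z \<le> sup_jump g z - \<eta>"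
    by (intro sup_jump_least) auto
  with \<open>\<eta> > 0\<close> show False by simp
qed

lemma first_record_eq_Min:
  assumes "cadlag z" "sup_jump g z > 0"
  shows "first_record g z = Min (record_times g z)"
proof -
  have "{s\<in>{0..1}. g (jump z s) = sup_jump g z} = record_times g z"
    using assms(2) by (auto simp: record_times_def less_eq_real_def)
  then show ?thesis
    unfolding first_record_def
    using record_times_finite[OF assms(1)] record_times_nonempty[OF assms]
    by (simp add: cInf_eq_Min)
qed

text \<open>Without a positive record, \<open>first_record g z = 0\<close>, where the jump vanishes by
  convention; so \<open>trim g z = z\<close> in that case.\<close>

lemma abs_jump_first_record:
  assumes "cadlag z"
  shows "\<bar>jump z (first_record g z)\<bar> = sup_jump g z"
proof (cases "sup_jump g z > 0")
  case True
  have "Min (record_times g z) \<in> record_times g z"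
    using record_times_finite[OF assms] record_times_nonempty[OF assms True] by simp
  then show ?thesis
    using first_record_eq_Min[OF assms True] jump_gauge_nonneg_eq_abs
    by (force simp: record_times_def)
next
  case False
  then have S0: "sup_jump g z = 0"
    using sup_jump_nonneg[OF assms] by simp
  have "first_record g z = 0"
    unfolding first_record_def S0 by (rule cInf_eq_minimum) auto
  then show ?thesis using S0 by simp
qed

lemma gauge_jump_time_change_close:
  assumes "lam \<in> Lambda" "cadlag z" "cadlag x"
    and "\<forall>\<tau>\<in>{0..1}. \<bar>z (lam \<tau>) - x \<tau>\<bar> \<le> \<delta>" and "t \<in> {0..1}"
  shows "\<bar>g (jump z (lam t)) - g (jump x t)\<bar> \<le> 2 * \<delta>"
  using jump_time_change_close[OF assms] jump_gauge_lipschitz order_trans by blast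

lemma trim_time_change_close_no_record:
  assumes x: "cadlag x" and z: "cadlag z" and lam: "lam \<in> Lambda"
    and close: "\<forall>\<tau>\<in>{0..1}. \<bar>z (lam \<tau>) - x \<tau>\<bar> \<le> \<delta>" and S0: "sup_jump g x = 0"
  shows "\<forall>\<tau>\<in>{0..1}. \<bar>trim g z (lam \<tau>) - trim g x \<tau>\<bar> \<le> 3 * \<delta>"
proof -
  have "trim g x = x"
    using abs_jump_first_record[OF x] S0 by (simp add: trim_def)
  have "sup_jump g z \<le> 2 * \<delta>"
  proof (rule sup_jump_least)
    fix s :: real assume "s \<in> {0..1}"
    then obtain t where t: "t \<in> {0..1}" "lam t = s"
      using Lambda_surj[OF lam] by blast
    have "g (jump x t) \<le> 0"
      using sup_jump_upper[OF x t(1)] S0 by simp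
    then show "g (jump z s) \<le> 2 * \<delta>"
      using gauge_jump_time_change_close[OF lam z x close t(1)] t(2) by simp
  qed
  then have step: "\<bar>jump z (first_record g z) * indicator A u\<bar> \<le> 2 * \<delta>" for A u
    using abs_jump_first_record[OF z] by (simp add: indicator_def)
  show ?thesis
  proof
    fix \<tau> :: real assume "\<tau> \<in> {0..1}"
    then have "\<bar>z (lam \<tau>) - x \<tau>\<bar> \<le> \<delta>"
      using close by blast
    moreover have "trim g z (lam \<tau>) - trim g x \<tau> = z (lam \<tau>) - x \<tau>
        - jump z (first_record g z) * indicator {first_record g z..1} (lam \<tau>)"
      using \<open>trim g x = x\<close> by (simp add: trim_def[of g z])
    ultimately show "\<bar>trim g z (lam \<tau>) - trim g x \<tau>\<bar> \<le> 3 * \<delta>"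
      using step[of "{first_record g z..1}" "lam \<tau>"] by linarith
  qed
qed

lemma first_record_eq_strict_max:
  assumes z: "cadlag z" and u: "u \<in> {0..1}"
    and strict: "\<And>s. s \<in> {0..1} \<Longrightarrow> s \<noteq> u \<Longrightarrow> g (jump z s) < g (jump z u)"
  shows "first_record g z = u"
proof -
  have "g (jump z s) \<le> g (jump z u)" if "s \<in> {0..1}" for s
    using strict[OF that] by (cases "s = u") auto
  then have "sup_jump g z = g (jump z u)"
    using sup_jump_least sup_jump_upper[OF z u] by (blast intro: antisym)
  then have "{s\<in>{0..1}. g (jump z s) = sup_jump g z} = {u}"
    using strict u by fastforce
  then show ?thesis
    by (simp add: first_record_def)
qed

lemma first_record_time_change:
  assumes x: "cadlag x" and z: "cadlag z" and lam: "lam \<in> Lambda"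
    and close: "\<forall>\<tau>\<in>{0..1}. \<bar>z (lam \<tau>) - x \<tau>\<bar> \<le> \<delta>" and "\<delta> > 0"
    and A: "record_times g x = {t1}"
    and gap: "\<And>t. t \<in> {0..1} \<Longrightarrow> t \<noteq> t1 \<Longrightarrow> g (jump x t) \<le> sup_jump g x - 5 * \<delta>"
  shows "first_record g z = lam t1"
proof -
  have "t1 \<in> record_times g x"
    using A by simp
  then have t1: "t1 \<in> {0..1}" "g (jump x t1) = sup_jump g x"
    by (simp_all add: record_times_def)
  show ?thesis
  proof (rule first_record_eq_strict_max[OF z Lambda_maps_unit[OF lam t1(1)]])
    fix s assume "s \<in> {0..1}" "s \<noteq> lam t1"
    then obtain t where t: "t \<in> {0..1}" "lam t = s" "t \<noteq> t1"
      using Lambda_surj[OF lam] by metis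
    \<comment> \<open>jumps move by at most \<open>2\<delta>\<close>, so the \<open>5\<delta>\<close> gap survives the perturbation\<close>
    have "g (jump z (lam t)) < g (jump z (lam t1))"
      using gauge_jump_time_change_close[OF lam z x close t(1)]
        gauge_jump_time_change_close[OF lam z x close t1(1)] gap[OF t(1,3)] t1(2) \<open>\<delta> > 0\<close>
      by linarith
    then show "g (jump z s) < g (jump z (lam t1))"
      using t(2) by simp
  qed
qed

lemma trim_time_change_close:
  assumes x: "cadlag x" and A: "at_most_one (record_times g x)"
    and z: "cadlag z" and lam: "lam \<in> Lambda"
    and close: "\<forall>\<tau>\<in>{0..1}. \<bar>z (lam \<tau>) - x \<tau>\<bar> \<le> \<delta>" and "\<delta> > 0"
    and gap: "sup_jump g x > 0 \<Longrightarrow>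
      \<forall>t\<in>{0..1}. t \<notin> record_times g x \<longrightarrow> g (jump x t) \<le> sup_jump g x - 5 * \<delta>"
  shows "\<forall>\<tau>\<in>{0..1}. \<bar>trim g z (lam \<tau>) - trim g x \<tau>\<bar> \<le> 3 * \<delta>"
proof (cases "sup_jump g x > 0")
  case False
  then show ?thesis
    using trim_time_change_close_no_record[OF x z lam close] sup_jump_nonneg[OF x] by simp
next
  case True
  have "card (record_times g x) = 1"
    using A record_times_nonempty[OF x True] by (auto simp: at_most_one_def le_Suc_eq)
  then obtain t1 where t1A: "record_times g x = {t1}"
    by (rule card_1_singletonE)
  then have "t1 \<in> record_times g x"
    by simp
  then have t1: "t1 \<in> {0..1}"
    by (simp add: record_times_def)
  have R1x: "first_record g x = t1"
    using first_record_eq_Min[OF x True] t1A by simp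
  have "g (jump x t) \<le> sup_jump g x - 5 * \<delta>" if "t \<in> {0..1}" "t \<noteq> t1" for t
    using gap[OF True] t1A that by blast
  then have R1z: "first_record g z = lam t1"
    by (rule first_record_time_change[OF x z lam close \<open>\<delta> > 0\<close> t1A])
  show ?thesis
  proof
    fix \<tau> :: real assume \<tau>: "\<tau> \<in> {0..1}"
    have "indicator {lam t1..1} (lam \<tau>) = (indicator {t1..1} \<tau> :: real)"
      using Lambda_le_iff[OF lam t1 \<tau>] Lambda_maps_unit[OF lam \<tau>] \<tau> by (simp add: indicator_def)
    then have "trim g z (lam \<tau>) - trim g x \<tau>
        = (z (lam \<tau>) - x \<tau>) - (jump z (lam t1) - jump x t1) * indicator {t1..1} \<tau>"
      unfolding trim_def R1z R1x by (simp add: algebra_simps)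
    moreover have "\<bar>(jump z (lam t1) - jump x t1) * indicator {t1..1} \<tau>\<bar> \<le> 2 * \<delta>"
      using jump_time_change_close[OF lam z x close t1] by (simp add: indicator_def)
    moreover have "\<bar>z (lam \<tau>) - x \<tau>\<bar> \<le> \<delta>"
      using close \<tau> by blast
    ultimately show "\<bar>trim g z (lam \<tau>) - trim g x \<tau>\<bar> \<le> 3 * \<delta>"
      by linarith
  qed
qed

lemma trim_unif_conv:
  assumes x: "cadlag x" and A: "at_most_one (record_times g x)"
    and xs: "\<And>n. cadlag (xs n)" and lam: "\<And>n. lam n \<in> Lambda"
    and conv: "unif_to_zero (\<lambda>n \<tau>. xs n (lam n \<tau>) - x \<tau>)"
  shows "unif_to_zero (\<lambda>n \<tau>. trim g (xs n) (lam n \<tau>) - trim g x \<tau>)"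
  unfolding unif_to_zero_def
proof (intro allI impI)
  fix e :: real assume "e > 0"
  obtain \<delta> where "\<delta> > 0" "3 * \<delta> < e" and gap: "sup_jump g x > 0 \<Longrightarrow>
      \<forall>t\<in>{0..1}. t \<notin> record_times g x \<longrightarrow> g (jump x t) \<le> sup_jump g x - 5 * \<delta>"
  proof (cases "sup_jump g x > 0")
    case True
    then obtain \<eta> where "\<eta> > 0"
      and \<eta>: "\<And>t. t \<in> {0..1} \<Longrightarrow> t \<notin> record_times g x \<Longrightarrow> g (jump x t) \<le> sup_jump g x - \<eta>"
      using record_times_gap[OF x] by blast
    have "g (jump x t) \<le> sup_jump g x - 5 * min (e/4) (\<eta>/5)"
      if "t \<in> {0..1}" "t \<notin> record_times g x" for t
      using \<eta>[OF that] by linarith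
    then show ?thesis
      by (intro that[of "min (e/4) (\<eta>/5)"]) (use \<open>e > 0\<close> \<open>\<eta> > 0\<close> in auto)
  qed (rule that[of "e/4"], use \<open>e > 0\<close> in auto)
  have "eventually (\<lambda>n. \<forall>\<tau>\<in>{0..1}. \<bar>xs n (lam n \<tau>) - x \<tau>\<bar> < \<delta>) sequentially"
    using conv \<open>\<delta> > 0\<close> unfolding unif_to_zero_def by blast
  then show "eventually (\<lambda>n. \<forall>\<tau>\<in>{0..1}. \<bar>trim g (xs n) (lam n \<tau>) - trim g x \<tau>\<bar> < e) sequentially"
  proof eventually_elim
    case (elim n)
    then have "\<forall>\<tau>\<in>{0..1}. \<bar>trim g (xs n) (lam n \<tau>) - trim g x \<tau>\<bar> \<le> 3 * \<delta>"
      by (intro trim_time_change_close[OF x A xs lam _ \<open>\<delta> > 0\<close> gap]) (auto intro: less_imp_le)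
    then show ?case
      using \<open>3 * \<delta> < e\<close> by fastforce
  qed
qed

lemma funpow_trim_unif_conv:
  assumes x: "cadlag x" and A: "\<forall>j<r. at_most_one (record_times g ((trim g ^^ j) x))"
    and xs: "\<And>n. cadlag (xs n)" and lam: "\<And>n. lam n \<in> Lambda"
    and conv: "unif_to_zero (\<lambda>n \<tau>. xs n (lam n \<tau>) - x \<tau>)"
  shows "unif_to_zero (\<lambda>n \<tau>. (trim g ^^ r) (xs n) (lam n \<tau>) - (trim g ^^ r) x \<tau>)"
  using A
proof (induction r)
  case (Suc r)
  then show ?case
    using trim_unif_conv[OF cadlag_funpow_trim[OF x] _ cadlag_funpow_trim[OF xs] lam] by simp
qed (simp add: conv)

lemma funpow_trim_jointly_continuous:
  assumes "cadlag x" "\<forall>j<r. at_most_one (record_times g ((trim g ^^ j) x))"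
  shows "J1_jointly_continuous_at (trim g ^^ r) x"
  unfolding J1_jointly_continuous_at_def J1_conv_def
  using funpow_trim_unif_conv[OF assms] by blast

lemma trim_jointly_continuous:
  assumes "cadlag x" "at_most_one (record_times g x)"
  shows "J1_jointly_continuous_at (trim g) x"
  using funpow_trim_jointly_continuous[OF assms(1), of 1] assms(2) by simp

lemma gauge_jump_shrink_jump:
  assumes "cadlag x" "0 < s" "s \<le> 1" "w \<le> 1"
  shows "g (jump (shrink_jump w t x) s) = (if s = t then (1 - w) * g (jump x t) else g (jump x s))"
  using jump_shrink_jump[OF assms(1-3)] jump_gauge_pos_homogeneous[of "1 - w"] assms(4) by simp

lemma sup_jump_shrink_jump:
  assumes x: "cadlag x" and w: "0 \<le> w" "w \<le> 1"
    and t: "t \<in> record_times g x" and more: "record_times g x - {t} \<noteq> {}"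
  shows "sup_jump g (shrink_jump w t x) = sup_jump g x"
proof (rule antisym)
  show "sup_jump g (shrink_jump w t x) \<le> sup_jump g x"
  proof (rule sup_jump_least)
    fix s :: real assume s: "s \<in> {0..1}"
    show "g (jump (shrink_jump w t x) s) \<le> sup_jump g x"
    proof (cases "s = 0")
      case False
      have "(1 - w) * g (jump x t) \<le> g (jump x t)" "g (jump x t) = sup_jump g x"
        using w t by (auto simp: record_times_def mult_le_cancel_right1)
      then show ?thesis
        using False s gauge_jump_shrink_jump[OF x _ _ w(2)] sup_jump_upper[OF x s] by auto
    qed (use sup_jump_nonneg[OF x] in simp)
  qed
  obtain t' where "t' \<in> record_times g x" "t' \<noteq> t"
    using more by blast
  then show "sup_jump g x \<le> sup_jump g (shrink_jump w t x)"
    using gauge_jump_shrink_jump[OF x _ _ w(2), of t' t]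
      sup_jump_upper[OF cadlag_shrink_jump[OF x], of t' w t]
    by (simp add: record_times_def)
qed

lemma record_times_shrink_jump:
  assumes x: "cadlag x" and w: "0 < w" "w \<le> 1"
    and t: "t \<in> record_times g x" and more: "record_times g x - {t} \<noteq> {}"
  shows "record_times g (shrink_jump w t x) = record_times g x - {t}"
proof -
  have "0 < sup_jump g x"
    using t by (simp add: record_times_def)
  then have "(1 - w) * sup_jump g x \<noteq> sup_jump g x"
    using w by simp
  then show ?thesis
    using sup_jump_shrink_jump[OF x less_imp_le[OF w(1)] w(2) t more] \<open>0 < sup_jump g x\<close>
      gauge_jump_shrink_jump[OF x _ _ w(2), of _ t] t
    by (auto simp: record_times_def split: if_splits)
qed

lemma first_record_shrink_first_record:
  assumes x: "cadlag x" and w: "0 < w" "w \<le> 1"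
    and t1: "t1 = Min (record_times g x)" and more: "record_times g x - {t1} \<noteq> {}"
  shows "first_record g (shrink_jump w t1 x) = Min (record_times g x - {t1})"
proof -
  have "t1 \<in> record_times g x"
    unfolding t1 using more record_times_finite[OF x] by (intro Min_in) auto
  then have "sup_jump g (shrink_jump w t1 x) > 0"
    using sup_jump_shrink_jump[OF x less_imp_le[OF w(1)] w(2) _ more]
    by (simp add: record_times_def)
  then show ?thesis
    using first_record_eq_Min[OF cadlag_shrink_jump[OF x]]
      record_times_shrink_jump[OF x w \<open>t1 \<in> record_times g x\<close> more] by simp
qed

lemma large_jump_of_trim_shrink_jump:
  assumes x: "cadlag x" and w: "0 < w" "w \<le> 1"
    and t1: "t1 = Min (record_times g x)" and more: "record_times g x - {t1} \<noteq> {}"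
    and gap: "\<And>t. t \<in> {0..1} \<Longrightarrow> t \<notin> record_times g x \<Longrightarrow> g (jump x t) \<le> sup_jump g x - \<eta>"
    and "\<eta> \<le> sup_jump g x" and s: "s \<in> {0..1}"
    and large: "g (jump (trim g (shrink_jump w t1 x)) s) > sup_jump g x - \<eta>"
  shows "s \<in> record_times g x - {Min (record_times g x - {t1})}"
proof -
  define z where "z = shrink_jump w t1 x"
  define t2 where "t2 = Min (record_times g x - {t1})"
  have z: "cadlag z"
    unfolding z_def by (rule cadlag_shrink_jump[OF x])
  have R1z: "first_record g z = t2"
    unfolding z_def t2_def by (rule first_record_shrink_first_record[OF x w t1 more])
  have "s \<noteq> 0"
    using large \<open>\<eta> \<le> sup_jump g x\<close> jump_gauge_0 by (auto simp: z_def)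
  then have s': "0 < s" "s \<le> 1"
    using s by auto
  have "s \<noteq> t2"
    using large \<open>\<eta> \<le> sup_jump g x\<close> jump_trim[OF z s'] jump_gauge_0 R1z
    by (auto simp: z_def)
  then have jump_s: "jump (trim g z) s = jump z s"
    using jump_trim[OF z s'] R1z by simp
  have "s \<in> record_times g x"
  proof (cases "s = t1")
    case True
    have "record_times g x \<noteq> {}" "finite (record_times g x)"
      using more record_times_finite[OF x] by auto
    then show ?thesis
      using True t1 by simp
  next
    case False
    then have "g (jump x s) > sup_jump g x - \<eta>"
      using large jump_s jump_shrink_jump[OF x s'] unfolding z_def by simp
    then show ?thesis
      using gap[OF s] by force
  qed
  with \<open>s \<noteq> t2\<close> show ?thesis
    unfolding t2_def by blast
qed

lemma J1_conv_large_jump_nearby: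
  assumes conv: "J1_conv ys y" and ys: "\<And>n. cadlag (ys n)" and y: "cadlag y"
    and t: "t \<in> {0..1}" and "d > 0" "\<eta> > 0"
  obtains n s where "s \<in> {0..1}" "\<bar>s - t\<bar> < d" "g (jump (ys n) s) > g (jump y t) - \<eta>"
proof -
  obtain lam where lam: "\<And>n. lam n \<in> Lambda" "unif_to_zero (\<lambda>n \<tau>. lam n \<tau> - \<tau>)"
    "unif_to_zero (\<lambda>n \<tau>. ys n (lam n \<tau>) - y \<tau>)"
    using conv unfolding J1_conv_def by blast
  have "\<eta>/4 > 0"
    using \<open>\<eta> > 0\<close> by simp
  then have "eventually (\<lambda>n. \<forall>\<tau>\<in>{0..1}. \<bar>ys n (lam n \<tau>) - y \<tau>\<bar> < \<eta>/4) sequentially"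
    using lam(3) unfolding unif_to_zero_def by blast
  moreover have "eventually (\<lambda>n. \<forall>\<tau>\<in>{0..1}. \<bar>lam n \<tau> - \<tau>\<bar> < d) sequentially"
    using lam(2) \<open>d > 0\<close> unfolding unif_to_zero_def by blast
  ultimately have "eventually (\<lambda>n. (\<forall>\<tau>\<in>{0..1}. \<bar>lam n \<tau> - \<tau>\<bar> < d) \<and>
      (\<forall>\<tau>\<in>{0..1}. \<bar>ys n (lam n \<tau>) - y \<tau>\<bar> < \<eta>/4)) sequentially"
    by (simp add: eventually_conj)
  then obtain n where n_time: "\<forall>\<tau>\<in>{0..1}. \<bar>lam n \<tau> - \<tau>\<bar> < d"
    and n_close: "\<forall>\<tau>\<in>{0..1}. \<bar>ys n (lam n \<tau>) - y \<tau>\<bar> < \<eta>/4"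
    unfolding eventually_sequentially by blast
  have "\<bar>g (jump (ys n) (lam n t)) - g (jump y t)\<bar> \<le> 2 * (\<eta>/4)"
    using n_close
    by (intro gauge_jump_time_change_close[OF lam(1) ys y _ t]) (simp add: less_imp_le)
  then have "g (jump (ys n) (lam n t)) > g (jump y t) - \<eta>"
    using \<open>\<eta> > 0\<close> by (simp only: abs_le_iff) linarith
  moreover have "lam n t \<in> {0..1}" "\<bar>lam n t - t\<bar> < d"
    using Lambda_maps_unit[OF lam(1) t] n_time t by auto
  ultimately show ?thesis
    using that by blast
qed

lemma not_at_most_one_record_times:
  assumes x: "cadlag x" and not_one: "\<not> at_most_one (record_times g x)"
  shows "Min (record_times g x) \<in> record_times g x"
    and "record_times g x - {Min (record_times g x)} \<noteq> {}"
proof -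
  have "finite (record_times g x)"
    by (rule record_times_finite[OF x])
  moreover from this have "record_times g x \<noteq> {}"
    using not_one unfolding at_most_one_def by auto
  ultimately show "Min (record_times g x) \<in> record_times g x"
    by simp
  show "record_times g x - {Min (record_times g x)} \<noteq> {}"
  proof
    assume "record_times g x - {Min (record_times g x)} = {}"
    then have "record_times g x \<subseteq> {Min (record_times g x)}"
      by blast
    then have "card (record_times g x) \<le> 1"
      using card_mono[of "{Min (record_times g x)}"] by fastforce
    then show False
      using not_one \<open>finite (record_times g x)\<close> unfolding at_most_one_def by simp
  qed
qed

lemma at_most_one_record_times_if_trim_continuous:
  assumes x: "cadlag x" and cont: "J1_continuous_at (trim g) x"
  shows "at_most_one (record_times g x)"
proof (rule ccontr)
  assume not_one: "\<not> at_most_one (record_times g x)"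
  define A where "A = record_times g x"
  define t1 where "t1 = Min A"
  define t2 where "t2 = Min (A - {t1})"
  have "finite A"
    unfolding A_def by (rule record_times_finite[OF x])
  have "t1 \<in> A" and more: "A - {t1} \<noteq> {}"
    using not_at_most_one_record_times[OF x not_one] unfolding A_def t1_def by auto
  then have "sup_jump g x > 0"
    unfolding A_def record_times_def by simp
  have "t2 \<in> A - {t1}"
    using \<open>finite A\<close> more unfolding t2_def by (intro Min_in) auto
  then have "t2 \<noteq> t1" and t2: "t2 \<in> {0..1}" "g (jump x t2) = sup_jump g x"
    unfolding A_def record_times_def by auto
  obtain \<eta> where "\<eta> > 0"
    and gap: "\<And>t. t \<in> {0..1} \<Longrightarrow> t \<notin> A \<Longrightarrow> g (jump x t) \<le> sup_jump g x - \<eta>"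
    using record_times_gap[OF x \<open>sup_jump g x > 0\<close>] unfolding A_def by blast
  have "\<eta> \<le> sup_jump g x"
    using gap[of 0] unfolding A_def record_times_def by simp
  define w where "w n = inverse (real (Suc (Suc n)))" for n
  have w: "0 < w n" "w n \<le> 1" for n
    unfolding w_def by (auto simp: inverse_le_1_iff)
  have "w \<longlonglongrightarrow> 0"
    unfolding w_def using LIMSEQ_Suc[OF LIMSEQ_inverse_real_of_nat] .
  then have conv: "J1_conv (\<lambda>n. trim g (shrink_jump (w n) t1 x)) (trim g x)"
    using cont cadlag_shrink_jump[OF x] J1_conv_shrink_jump_vanishing[of w t1 x]
    unfolding J1_continuous_at_def by simp
  define d where "d = Min ((\<lambda>a. \<bar>a - t2\<bar>) ` (A - {t2}))"
  have "d > 0"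
    using \<open>finite A\<close> \<open>t1 \<in> A\<close> \<open>t2 \<noteq> t1\<close> unfolding d_def by (subst Min_gr_iff) auto
  obtain n s where s: "s \<in> {0..1}" "\<bar>s - t2\<bar> < d"
    and large: "g (jump (trim g (shrink_jump (w n) t1 x)) s) > g (jump (trim g x) t2) - \<eta>"
    using J1_conv_large_jump_nearby[OF conv cadlag_trim[OF cadlag_shrink_jump[OF x]]
        cadlag_trim[OF x] t2(1) \<open>d > 0\<close> \<open>\<eta> > 0\<close>] by blast
  have "first_record g x = t1"
    using first_record_eq_Min[OF x \<open>sup_jump g x > 0\<close>] unfolding t1_def A_def by simp
  then have "jump (trim g x) t2 = jump x t2"
    using jump_trim[OF x] \<open>t2 \<noteq> t1\<close> \<open>t2 \<in> A - {t1}\<close>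
    unfolding A_def record_times_def by auto
  then have "s \<in> A - {t2}"
    using large_jump_of_trim_shrink_jump[OF x w t1_def[unfolded A_def] more[unfolded A_def]
        gap[unfolded A_def] \<open>\<eta> \<le> sup_jump g x\<close> s(1)] large t2(2)
    unfolding A_def t2_def t1_def by simp
  then have "d \<le> \<bar>s - t2\<bar>"
    unfolding d_def using \<open>finite A\<close> by simp
  with s(2) show False
    by simp
qed

end

theorem theorem2p2:
  fixes x :: "real \<Rightarrow> real" and r :: nat
  assumes "cadlag x"
  shows
    "(at_most_one (A_plus 1 x) \<longrightarrow> J1_jointly_continuous_at R_trim x)
   \<and> ((\<forall>j<r. at_most_one (A_plus 1 ((R_trim ^^ j) x)))
        \<longrightarrow> J1_jointly_continuous_at (R_trim ^^ r) x)
   \<and> (J1_continuous_at R_trim x \<longrightarrow> at_most_one (A_plus 1 x))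
   \<and> (at_most_one (A_abs 1 x) \<longrightarrow> J1_jointly_continuous_at R_trim_abs x)
   \<and> ((\<forall>j<r. at_most_one (A_abs 1 ((R_trim_abs ^^ j) x)))
        \<longrightarrow> J1_jointly_continuous_at (R_trim_abs ^^ r) x)
   \<and> (J1_continuous_at R_trim_abs x \<longrightarrow> at_most_one (A_abs 1 x))"
proof -
  have "(at_most_one (record_times g x) \<longrightarrow> J1_jointly_continuous_at (trim g) x)
    \<and> ((\<forall>j<r. at_most_one (record_times g ((trim g ^^ j) x)))
         \<longrightarrow> J1_jointly_continuous_at (trim g ^^ r) x)
    \<and> (J1_continuous_at (trim g) x \<longrightarrow> at_most_one (record_times g x))"
    if "jump_gauge g" for g
    using trim_jointly_continuous[OF that assms] funpow_trim_jointly_continuous[OF that assms]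
      at_most_one_record_times_if_trim_continuous[OF that assms] by blast
  from this[OF jump_gauge_id] this[OF jump_gauge_abs] show ?thesis
    unfolding R_trim_eq_trim R_trim_abs_eq_trim A_plus_eq_record_times A_abs_eq_record_times
    by blast
qed

end
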